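(* Let $\lambda_i$ be a minuscule fundamental weight of a complex simple Lie algebra, let $u\in W^{P_i}$, and let $\alpha$ be a positive root. (I) If $\ell(s_\alpha u)=\ell(u)+1$, then $\alpha$ is a simple root and $(u(\lambda_i),\alpha^\vee)=1$. (II) If $\ell(s_\alpha u)=\ell(u)-(s-1)$, then $\alpha=\psi$ and $(u(\lambda_i),\psi^\vee)=-1$. Here the length $\ell$ is taken in $W^{P_i}$.
   Context: Simple roots $\alpha_1,\dots,\alpha_l$, Weyl group $W$ with Coxeter length $\ell$, $\alpha^\vee=2\alpha/(\alpha,\alpha)$. $\lambda_i$ minuscule: $(\lambda_i,\alpha_j^\vee)=\delta_{ij}$ and $(\lambda_i,\beta^\vee)\le1$ for all positive roots $\beta$. $W_{P_i}$ is the subgroup generated by $s_{\alpha_j}$, $j\ne i$; $W^{P_i}$ is the set of minimal length coset representatives of $W/W_{P_i}$; the length in $W^{P_i}$ of $x\in W$ is the length of the unique $u'\in W^{P_i}$ with $x\in u'W_{P_i}$. $\psi=\sum_j q_j\alpha_j$ is the highest root and $s=1+\sum_j q_j$ is the Coxeter number. *)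

theory Defs
  imports "HOL-Analysis.Analysis"
begin

definition reflection :: "'a::euclidean_space \<Rightarrow> 'a \<Rightarrow> 'a" where
  "reflection a x = x - (2 * (x \<bullet> a) / (a \<bullet> a)) *\<^sub>R a"

definition coroot :: "'a::euclidean_space \<Rightarrow> 'a" where
  "coroot a = (2 / (a \<bullet> a)) *\<^sub>R a"

definition root_system :: "'a::euclidean_space set \<Rightarrow> bool" where
  "root_system R \<longleftrightarrow> finite R \<and> 0 \<notin> R \<and> span R = UNIV
     \<and> (\<forall>a\<in>R. \<forall>b\<in>R. reflection a b \<in> R)
     \<and> (\<forall>a\<in>R. \<forall>b\<in>R. b \<bullet> coroot a \<in> \<int>)
     \<and> (\<forall>a\<in>R. \<forall>c::real. c *\<^sub>R a \<in> R \<longrightarrow> c = 1 \<or> c = -1)"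

definition irreducible_rs :: "'a::euclidean_space set \<Rightarrow> bool" where
  "irreducible_rs R \<longleftrightarrow> \<not> (\<exists>A B. A \<noteq> {} \<and> B \<noteq> {} \<and> A \<union> B = R \<and> A \<inter> B = {}
                            \<and> (\<forall>a\<in>A. \<forall>b\<in>B. a \<bullet> b = 0))"

definition nonneg_comb :: "'a::euclidean_space set \<Rightarrow> 'a \<Rightarrow> bool" where
  "nonneg_comb D x \<longleftrightarrow> (\<exists>c::'a \<Rightarrow> nat. x = (\<Sum>a\<in>D. real (c a) *\<^sub>R a))"

definition simple_system :: "'a::euclidean_space set \<Rightarrow> 'a set \<Rightarrow> bool" where
  "simple_system R D \<longleftrightarrow> D \<subseteq> R \<and> independent D
     \<and> (\<forall>b\<in>R. nonneg_comb D b \<or> nonneg_comb D (- b))"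

definition pos_roots :: "'a::euclidean_space set \<Rightarrow> 'a set \<Rightarrow> 'a set" where
  "pos_roots R D = {b \<in> R. nonneg_comb D b}"

definition simple_word :: "'a::euclidean_space list \<Rightarrow> 'a \<Rightarrow> 'a" where
  "simple_word xs = foldr (\<lambda>a f. reflection a \<circ> f) xs id"

definition weyl :: "'a::euclidean_space set \<Rightarrow> ('a \<Rightarrow> 'a) set" where
  "weyl D = {simple_word xs | xs. set xs \<subseteq> D}"

definition wlen :: "'a::euclidean_space set \<Rightarrow> ('a \<Rightarrow> 'a) \<Rightarrow> nat" where
  "wlen D w = (LEAST n. \<exists>xs. set xs \<subseteq> D \<and> length xs = n \<and> simple_word xs = w)"

definition WP :: "'a::euclidean_space set \<Rightarrow> 'a \<Rightarrow> ('a \<Rightarrow> 'a) set" where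
  "WP D ai = {simple_word xs | xs. set xs \<subseteq> D - {ai}}"

definition WupP :: "'a::euclidean_space set \<Rightarrow> 'a \<Rightarrow> ('a \<Rightarrow> 'a) set" where
  "WupP D ai = {u \<in> weyl D. \<forall>v\<in>WP D ai. wlen D u \<le> wlen D (u \<circ> v)}"

text \<open>Length in \<open>W^P\<close> of \<open>x\<close>: length of the unique \<open>u' \<in> W^P\<close> with \<open>x \<in> u' W_P\<close>.\<close>
definition lenP :: "'a::euclidean_space set \<Rightarrow> 'a \<Rightarrow> ('a \<Rightarrow> 'a) \<Rightarrow> nat" where
  "lenP D ai x = wlen D (THE u. u \<in> WupP D ai \<and> (\<exists>v\<in>WP D ai. x = u \<circ> v))"

definition fund_weight :: "'a::euclidean_space set \<Rightarrow> 'a \<Rightarrow> 'a \<Rightarrow> bool" where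
  "fund_weight D ai lam \<longleftrightarrow> (\<forall>b\<in>D. lam \<bullet> coroot b = (if b = ai then 1 else 0))"

definition minuscule :: "'a::euclidean_space set \<Rightarrow> 'a set \<Rightarrow> 'a \<Rightarrow> 'a \<Rightarrow> bool" where
  "minuscule R D ai lam \<longleftrightarrow> fund_weight D ai lam
     \<and> (\<forall>b\<in>pos_roots R D. lam \<bullet> coroot b \<le> 1)"

definition highest_root :: "'a::euclidean_space set \<Rightarrow> 'a set \<Rightarrow> 'a \<Rightarrow> bool" where
  "highest_root R D psi \<longleftrightarrow> psi \<in> R \<and> (\<forall>b\<in>R. nonneg_comb D (psi - b))"

definition height :: "'a::euclidean_space set \<Rightarrow> 'a \<Rightarrow> nat" where
  "height D x = (THE h. \<exists>c::'a \<Rightarrow> nat. x = (\<Sum>a\<in>D. real (c a) *\<^sub>R a) \<and> h = (\<Sum>a\<in>D. c a))"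

definition coxeter_number :: "'a::euclidean_space set \<Rightarrow> 'a \<Rightarrow> nat" where
  "coxeter_number D psi = 1 + height D psi"

end

theory Submission
  imports Defs
begin

(* For a minuscule weight \<lambda>, the length in W^P of any w is ht(\<lambda> - w \<lambda>).
   Indeed, s_a w changes this height by \<langle>w \<lambda>, a^\<or>\<rangle> \<in> {-1, 0, 1}, and
   along a reduced word of a minimal coset representative every letter must
   contribute +1 (a 0 would let s_a be absorbed into W_P, a -1 would shorten
   the word).  As s_\<alpha> u \<lambda> = u \<lambda> - \<langle>u \<lambda>, \<alpha>^\<or>\<rangle> \<alpha>, this gives
     \<ell>(s_\<alpha> u) - \<ell>(u) = \<langle>u \<lambda>, \<alpha>^\<or>\<rangle> ht(\<alpha>),   \<langle>u \<lambda>, \<alpha>^\<or>\<rangle> \<in> {-1, 0, 1}.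
   A jump of +1 forces ht(\<alpha>) = 1, i.e. \<alpha> simple.  A drop of
   s - 1 = ht(\<psi>) \<ge> ht(\<alpha>) forces \<langle>u \<lambda>, \<alpha>^\<or>\<rangle> = -1 and ht(\<alpha>) = ht(\<psi>),
   hence \<alpha> = \<psi> since \<psi> - \<alpha> is a nonnegative combination of simple roots. *)

section \<open>Reflections and words in reflections\<close>

lemma coroot_inner: "x \<bullet> coroot a = 2 * (x \<bullet> a) / (a \<bullet> a)"
  by (simp add: coroot_def)

lemma reflection_coroot: "reflection a x = x - (x \<bullet> coroot a) *\<^sub>R a"
  by (simp add: reflection_def coroot_inner)

lemma orthogonal_transformation_reflection: "orthogonal_transformation (reflection a)"
  unfolding orthogonal_transformation_def
proof
  show "linear (reflection a)"
    unfolding reflection_coroot by (intro linearI) (auto simp: inner_add_left algebra_simps)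
  show "\<forall>x y. reflection a x \<bullet> reflection a y = x \<bullet> y"
  proof (cases "a = 0")
    case False
    then show ?thesis unfolding reflection_def
      by (simp add: inner_diff_left inner_diff_right algebra_simps power2_eq_square)
        (simp add: field_simps inner_commute)
  qed (simp add: reflection_def)
qed

lemma reflection_reflection [simp]: "reflection a (reflection a x) = x"
proof (cases "a = 0")
  case False
  then show ?thesis unfolding reflection_def by (simp add: inner_diff_left algebra_simps)
qed (simp add: reflection_def)

lemma reflection_self: "a \<noteq> 0 \<Longrightarrow> reflection a a = - a"
  by (simp add: reflection_def scaleR_2)

lemma coroot_uminus: "coroot (- a) = - coroot a"
  by (simp add: coroot_def)

lemma inner_reflection_coroot_self: "a \<noteq> 0 \<Longrightarrow> reflection a x \<bullet> coroot a = - (x \<bullet> coroot a)"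
  by (simp add: reflection_coroot inner_diff_left coroot_inner)

lemma reflection_orthogonal_transformation:
  "orthogonal_transformation w \<Longrightarrow> reflection (w a) (w x) = w (reflection a x)"
  unfolding reflection_def orthogonal_transformation_def by (simp add: linear_diff linear_scale)

lemma coroot_orthogonal_transformation:
  "orthogonal_transformation w \<Longrightarrow> coroot (w a) = w (coroot a)"
  unfolding coroot_def orthogonal_transformation_def by (simp add: linear_scale)

lemma simple_word_Nil [simp]: "simple_word [] = id"
  by (simp add: simple_word_def)

lemma simple_word_Cons [simp]: "simple_word (a # xs) = reflection a \<circ> simple_word xs"
  by (simp add: simple_word_def)

lemma simple_word_append: "simple_word (xs @ ys) = simple_word xs \<circ> simple_word ys"
  by (induction xs) auto

lemma orthogonal_transformation_simple_word: "orthogonal_transformation (simple_word xs)"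
proof (induction xs)
  case (Cons a xs)
  then show ?case
    unfolding simple_word_Cons by (intro orthogonal_transformation_compose orthogonal_transformation_reflection)
qed (simp add: id_def)

lemma simple_word_rev_cancel [simp]: "simple_word (rev xs) (simple_word xs x) = x"
  by (induction xs arbitrary: x) (auto simp: simple_word_append)

lemma simple_word_cancel_rev [simp]: "simple_word xs (simple_word (rev xs) x) = x"
  using simple_word_rev_cancel[of "rev xs"] by simp

lemma simple_word_uminus: "simple_word xs (- x) = - simple_word xs x"
  using orthogonal_transformation_simple_word linear_neg orthogonal_transformation_linear by blast

lemma reflection_simple_word:
  "reflection (simple_word xs a) (simple_word xs x) = simple_word xs (reflection a x)"
  by (rule reflection_orthogonal_transformation[OF orthogonal_transformation_simple_word])

lemma inner_simple_word: "simple_word xs x \<bullet> y = x \<bullet> simple_word (rev xs) y"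
  by (metis orthogonal_transformation_def orthogonal_transformation_simple_word simple_word_cancel_rev)

lemma inner_coroot_simple_word:
  "simple_word xs x \<bullet> coroot b = x \<bullet> coroot (simple_word (rev xs) b)"
  by (simp add: inner_simple_word coroot_orthogonal_transformation orthogonal_transformation_simple_word)

section \<open>Reduced words and minimal coset representatives\<close>

definition reduced_word :: "'a::euclidean_space set \<Rightarrow> 'a list \<Rightarrow> bool" where
  "reduced_word D xs \<longleftrightarrow> set xs \<subseteq> D \<and> wlen D (simple_word xs) = length xs"

lemma simple_word_in_weyl: "set xs \<subseteq> D \<Longrightarrow> simple_word xs \<in> weyl D"
  unfolding weyl_def by blast

lemma weyl_comp: "w \<in> weyl D \<Longrightarrow> v \<in> weyl D \<Longrightarrow> w \<circ> v \<in> weyl D"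
  unfolding weyl_def by (auto simp: simple_word_append[symmetric]) (metis le_sup_iff set_append)

lemma WP_subset_weyl: "WP D ai \<subseteq> weyl D"
  unfolding WP_def weyl_def by blast

lemma id_in_WP: "id \<in> WP D ai"
  unfolding WP_def by (auto intro!: exI[where x="[]"])

lemma WP_comp: "w \<in> WP D ai \<Longrightarrow> v \<in> WP D ai \<Longrightarrow> w \<circ> v \<in> WP D ai"
  unfolding WP_def by (auto simp: simple_word_append[symmetric]) (metis le_sup_iff set_append)

lemma WupP_subset_weyl: "WupP D ai \<subseteq> weyl D"
  unfolding WupP_def by blast

lemma WupP_wlen_le: "u \<in> WupP D ai \<Longrightarrow> v \<in> WP D ai \<Longrightarrow> wlen D u \<le> wlen D (u \<circ> v)"
  unfolding WupP_def by blast

lemma wlen_le_length: "set xs \<subseteq> D \<Longrightarrow> wlen D (simple_word xs) \<le> length xs"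
  unfolding wlen_def by (rule Least_le) blast

lemma reduced_word_exists:
  assumes "w \<in> weyl D"
  shows "\<exists>xs. reduced_word D xs \<and> simple_word xs = w"
proof -
  have "\<exists>xs. set xs \<subseteq> D \<and> length xs = wlen D w \<and> simple_word xs = w"
    unfolding wlen_def by (rule LeastI_ex) (use assms in \<open>auto simp: weyl_def\<close>)
  then show ?thesis unfolding reduced_word_def by metis
qed

lemma wlen_reflection_comp_le:
  assumes "w \<in> weyl D" "a \<in> D"
  shows "wlen D (reflection a \<circ> w) \<le> wlen D w + 1"
proof -
  obtain xs where "reduced_word D xs" "simple_word xs = w"
    using reduced_word_exists[OF assms(1)] by blast
  with wlen_le_length[of "a # xs" D] assms(2) show ?thesis
    unfolding reduced_word_def by auto
qed

lemma reduced_word_ConsD: "reduced_word D (a # xs) \<Longrightarrow> reduced_word D xs"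
  using wlen_le_length[of xs D] wlen_reflection_comp_le[OF simple_word_in_weyl, of xs D a]
  unfolding reduced_word_def by auto

lemma WupP_reduced_word_ConsD:
  assumes u: "simple_word (a # xs) \<in> WupP D ai" and red: "reduced_word D (a # xs)"
  shows "simple_word xs \<in> WupP D ai"
  unfolding WupP_def
proof (intro CollectI conjI ballI)
  have a: "a \<in> D" and xs: "set xs \<subseteq> D" using red by (auto simp: reduced_word_def)
  show "simple_word xs \<in> weyl D" using simple_word_in_weyl[OF xs] .
  fix v assume v: "v \<in> WP D ai"
  have "length (a # xs) \<le> wlen D (reflection a \<circ> (simple_word xs \<circ> v))"
    using WupP_wlen_le[OF u v] red unfolding reduced_word_def by (simp add: o_assoc)
  also have "\<dots> \<le> wlen D (simple_word xs \<circ> v) + 1"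
    using v WP_subset_weyl by (intro wlen_reflection_comp_le weyl_comp simple_word_in_weyl xs a) auto
  finally show "wlen D (simple_word xs) \<le> wlen D (simple_word xs \<circ> v)"
    using reduced_word_ConsD[OF red] by (simp add: reduced_word_def)
qed

lemma WupP_coset_representative:
  assumes w: "w \<in> weyl D"
  shows "\<exists>u\<in>WupP D ai. \<exists>v\<in>WP D ai. w = u \<circ> v"
proof -
  obtain v0 where v0: "v0 \<in> WP D ai"
    and v0_min: "\<And>v. v \<in> WP D ai \<Longrightarrow> wlen D (w \<circ> v0) \<le> wlen D (w \<circ> v)"
    using ex_has_least_nat[of "\<lambda>v. v \<in> WP D ai" id "\<lambda>v. wlen D (w \<circ> v)"] id_in_WP by blast
  have "w \<circ> v0 \<in> WupP D ai"
    unfolding WupP_def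
  proof (intro CollectI conjI ballI)
    show "w \<circ> v0 \<in> weyl D" using w v0 WP_subset_weyl by (auto intro: weyl_comp)
    fix v assume "v \<in> WP D ai"
    then show "wlen D (w \<circ> v0) \<le> wlen D (w \<circ> v0 \<circ> v)"
      using v0_min[OF WP_comp[OF v0]] by (simp add: o_assoc)
  qed
  moreover obtain zs where zs: "set zs \<subseteq> D - {ai}" "v0 = simple_word zs"
    using v0 unfolding WP_def by blast
  then have "simple_word (rev zs) \<in> WP D ai" unfolding WP_def by (metis (mono_tags) CollectI set_rev)
  moreover have "w = (w \<circ> v0) \<circ> simple_word (rev zs)"
    by (auto simp: zs(2))
  ultimately show ?thesis by blast
qed

section \<open>Root systems with a simple system\<close>

locale simple_root_system =
  fixes R D :: "'a::euclidean_space set"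
  assumes root_system: "root_system R" and simple_system: "simple_system R D"
begin

lemma finite_R: "finite R" and zero_notin_R: "0 \<notin> R" and span_R: "span R = UNIV"
  and reflection_in_R: "\<And>a b. a \<in> R \<Longrightarrow> b \<in> R \<Longrightarrow> reflection a b \<in> R"
  and inner_coroot_Ints: "\<And>a b. a \<in> R \<Longrightarrow> b \<in> R \<Longrightarrow> b \<bullet> coroot a \<in> \<int>"
  and root_multiples: "\<And>a c. a \<in> R \<Longrightarrow> c *\<^sub>R a \<in> R \<Longrightarrow> c = 1 \<or> c = -1"
  using root_system unfolding root_system_def by auto

lemma D_subset_R: "D \<subseteq> R" and independent_D: "independent D"
  and root_pos_or_neg: "\<And>b. b \<in> R \<Longrightarrow> nonneg_comb D b \<or> nonneg_comb D (- b)"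
  using simple_system unfolding simple_system_def by auto

abbreviation pos :: "'a \<Rightarrow> bool" where
  "pos \<equiv> nonneg_comb D"

lemma finite_D: "finite D"
  using D_subset_R finite_R finite_subset by blast

lemma root_nonzero: "b \<in> R \<Longrightarrow> b \<noteq> 0"
  using zero_notin_R by auto

lemma uminus_root: "b \<in> R \<Longrightarrow> - b \<in> R"
  using reflection_in_R[of b b] reflection_self[OF root_nonzero] by auto

lemma span_D: "span D = UNIV"
proof -
  have "pos b \<Longrightarrow> b \<in> span D" for b
    unfolding nonneg_comb_def by (blast intro: span_sum span_scale span_base)
  then have "R \<subseteq> span D"
    using root_pos_or_neg span_neg by fastforce
  then show ?thesis
    using span_R span_minimal[of R "span D"] by auto
qed

definition coeff :: "'a \<Rightarrow> 'a \<Rightarrow> real" where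
  "coeff x d = representation D x d"

definition ht :: "'a \<Rightarrow> real" where
  "ht x = (\<Sum>d\<in>D. coeff x d)"

lemma coeff_add: "coeff (x + y) d = coeff x d + coeff y d"
  and coeff_diff: "coeff (x - y) d = coeff x d - coeff y d"
  and coeff_scaleR: "coeff (r *\<^sub>R x) d = r * coeff x d"
  and coeff_uminus: "coeff (- x) d = - coeff x d"
  and coeff_zero: "coeff 0 d = 0"
  unfolding coeff_def using span_D
  by (simp_all add: representation_add representation_diff representation_scale
      representation_neg representation_zero independent_D)

lemma coeff_simple: "a \<in> D \<Longrightarrow> coeff a d = (if d = a then 1 else 0)"
  unfolding coeff_def by (simp add: representation_basis independent_D)

lemma coeff_sum: "d \<in> D \<Longrightarrow> coeff (\<Sum>a\<in>D. c a *\<^sub>R a) d = c d"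
proof -
  assume d: "d \<in> D"
  have "coeff (\<Sum>a\<in>D. c a *\<^sub>R a) d = (\<Sum>a\<in>D. c a * coeff a d)"
    unfolding coeff_def using span_D by (simp add: representation_sum independent_D representation_scale)
  also have "\<dots> = (\<Sum>a\<in>D. if a = d then c a else 0)"
    by (intro sum.cong) (auto simp: coeff_simple)
  finally show ?thesis using d finite_D by simp
qed

lemma sum_coeff: "(\<Sum>d\<in>D. coeff x d *\<^sub>R d) = x"
  unfolding coeff_def using span_D by (simp add: sum_representation_eq independent_D finite_D)

lemma coeff_eqI: "(\<And>d. d \<in> D \<Longrightarrow> coeff x d = coeff y d) \<Longrightarrow> x = y"
  by (metis (no_types, lifting) sum.cong sum_coeff)

lemma ht_add: "ht (x + y) = ht x + ht y"
  and ht_diff: "ht (x - y) = ht x - ht y"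
  and ht_scaleR: "ht (r *\<^sub>R x) = r * ht x"
  and ht_zero: "ht 0 = 0"
  by (simp_all add: ht_def coeff_add coeff_diff coeff_scaleR coeff_zero sum.distrib
      sum_subtractf sum_distrib_left)

lemma ht_simple: "a \<in> D \<Longrightarrow> ht a = 1"
  using finite_D by (simp add: ht_def coeff_simple)

lemma ht_diff_reflection: "ht (x - reflection a y) = ht (x - y) + (y \<bullet> coroot a) * ht a"
  by (simp add: reflection_coroot ht_diff ht_add ht_scaleR)

lemma nonneg_comb_iff_coeff: "pos x \<longleftrightarrow> (\<forall>d\<in>D. \<exists>n::nat. coeff x d = real n)"
proof
  assume "pos x"
  then show "\<forall>d\<in>D. \<exists>n::nat. coeff x d = real n"
    unfolding nonneg_comb_def using coeff_sum by auto
next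
  assume "\<forall>d\<in>D. \<exists>n::nat. coeff x d = real n"
  then obtain c where c: "\<And>d. d \<in> D \<Longrightarrow> coeff x d = real (c d)" by metis
  have "x = (\<Sum>a\<in>D. real (c a) *\<^sub>R a)"
    by (subst sum_coeff[symmetric]) (intro sum.cong, auto simp: c)
  then show "pos x" unfolding nonneg_comb_def by blast
qed

lemma nonneg_comb_coeff_nonneg: "pos x \<Longrightarrow> d \<in> D \<Longrightarrow> coeff x d \<ge> 0"
  using nonneg_comb_iff_coeff by fastforce

lemma nonneg_comb_ht_nat: "pos x \<Longrightarrow> \<exists>n::nat. ht x = real n"
proof -
  assume "pos x"
  then obtain c where "\<And>d. d \<in> D \<Longrightarrow> coeff x d = real (c d)"
    using nonneg_comb_iff_coeff by metis
  then have "ht x = real (\<Sum>d\<in>D. c d)" by (simp add: ht_def)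
  then show ?thesis by blast
qed

lemma nonneg_comb_ht_nonneg: "pos x \<Longrightarrow> ht x \<ge> 0"
  unfolding ht_def by (intro sum_nonneg nonneg_comb_coeff_nonneg)

lemma nonneg_comb_ht_eq_0: "pos x \<Longrightarrow> ht x = 0 \<Longrightarrow> x = 0"
  using sum_nonneg_eq_0_iff[OF finite_D, of "coeff x"] nonneg_comb_coeff_nonneg
  by (intro coeff_eqI) (auto simp: ht_def coeff_zero)

lemma positive_root_ht_pos: "b \<in> R \<Longrightarrow> pos b \<Longrightarrow> ht b > 0"
  using nonneg_comb_ht_nonneg nonneg_comb_ht_eq_0 root_nonzero by force

lemma simple_nonneg_comb: "a \<in> D \<Longrightarrow> pos a"
  by (auto simp: nonneg_comb_iff_coeff coeff_simple intro: exI[where x=1] exI[where x=0])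

lemma positive_root_ht_1: "b \<in> R \<Longrightarrow> pos b \<Longrightarrow> ht b = 1 \<Longrightarrow> b \<in> D"
proof -
  assume b: "b \<in> R" "pos b" "ht b = 1"
  obtain c where c: "\<And>d. d \<in> D \<Longrightarrow> coeff b d = real (c d)"
    using nonneg_comb_iff_coeff b(2) by metis
  have "real (\<Sum>d\<in>D. c d) = 1" using b(3) by (simp add: ht_def c)
  then have "(\<Sum>d\<in>D. c d) = 1" by linarith
  then obtain d where d: "d \<in> D" "c d = 1" "\<forall>e\<in>D. d \<noteq> e \<longrightarrow> c e = 0"
    using sum_eq_1_iff[OF finite_D] by auto
  have "b = d"
    by (rule coeff_eqI) (use d in \<open>auto simp: c coeff_simple\<close>)
  with d show ?thesis by simp
qed

lemma height_eq_ht: "pos x \<Longrightarrow> real (height D x) = ht x"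
proof -
  assume "pos x"
  then obtain c0 where c0: "x = (\<Sum>a\<in>D. real (c0 a) *\<^sub>R a)"
    unfolding nonneg_comb_def by blast
  have "height D x = (\<Sum>a\<in>D. c0 a)"
    unfolding height_def
  proof (rule the_equality)
    show "\<exists>c. x = (\<Sum>a\<in>D. real (c a) *\<^sub>R a) \<and> (\<Sum>a\<in>D. c0 a) = (\<Sum>a\<in>D. c a)"
      using c0 by blast
    fix h assume "\<exists>c. x = (\<Sum>a\<in>D. real (c a) *\<^sub>R a) \<and> h = (\<Sum>a\<in>D. c a)"
    then obtain c where c: "x = (\<Sum>a\<in>D. real (c a) *\<^sub>R a)" "h = (\<Sum>a\<in>D. c a)" by blast
    have "real (c d) = real (c0 d)" if "d \<in> D" for d
      using coeff_sum[OF that, of "\<lambda>a. real (c a)"] coeff_sum[OF that, of "\<lambda>a. real (c0 a)"] c(1) c0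
      by simp
    then show "h = (\<Sum>a\<in>D. c0 a)" using c(2) by simp
  qed
  then show ?thesis
    unfolding ht_def using coeff_sum c0 by simp
qed

lemma highest_root_nonneg_comb:
  assumes "highest_root R D psi"
  shows "pos psi"
proof (rule ccontr)
  have psi: "psi \<in> R" using assms unfolding highest_root_def by blast
  then have "pos (psi - - psi)" using assms uminus_root unfolding highest_root_def by blast
  then have "coeff psi d \<ge> 0" if "d \<in> D" for d
    using nonneg_comb_coeff_nonneg[OF \<open>pos (psi - - psi)\<close> that]
    by (simp add: coeff_add coeff_diff coeff_uminus)
  moreover assume "\<not> pos psi"
  then have "coeff (- psi) d \<ge> 0" if "d \<in> D" for d
    using root_pos_or_neg[OF psi] nonneg_comb_coeff_nonneg that by blast
  ultimately have "psi = 0"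
    by (intro coeff_eqI) (force simp: coeff_uminus coeff_zero)
  then show False using root_nonzero[OF psi] by simp
qed

lemma reflection_simple_positive_root:
  assumes a: "a \<in> D" and b: "b \<in> R" "pos b" "b \<noteq> a"
  shows "pos (reflection a b)"
proof (rule ccontr)
  assume "\<not> pos (reflection a b)"
  moreover have "reflection a b \<in> R" using reflection_in_R a b D_subset_R by blast
  ultimately have neg: "pos (- reflection a b)" using root_pos_or_neg by blast
  have "coeff b d = 0" if d: "d \<in> D" "d \<noteq> a" for d
  proof -
    \<comment> \<open>\<open>s_a\<close> changes only the \<open>a\<close>-coefficient\<close>
    have "coeff (- reflection a b) d = - coeff b d"
      using d a by (simp add: reflection_coroot coeff_uminus coeff_diff coeff_scaleR coeff_simple)
    then show ?thesis
      using nonneg_comb_coeff_nonneg[OF neg d(1)] nonneg_comb_coeff_nonneg[OF b(2) d(1)] by simp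
  qed
  then have b_eq: "b = coeff b a *\<^sub>R a"
    by (intro coeff_eqI) (auto simp: coeff_scaleR coeff_simple a)
  then have "coeff b a = 1 \<or> coeff b a = -1"
    using root_multiples a b(1) D_subset_R by (metis subsetD)
  with b_eq nonneg_comb_coeff_nonneg[OF b(2) a] b(3) show False by auto
qed

lemma simple_word_in_R: "set xs \<subseteq> D \<Longrightarrow> b \<in> R \<Longrightarrow> simple_word xs b \<in> R"
  by (induction xs) (use D_subset_R reflection_in_R in auto)

lemma exchange_right:
  "set xs \<subseteq> D \<Longrightarrow> a \<in> D \<Longrightarrow> \<not> pos (simple_word xs a) \<Longrightarrow>
    \<exists>ys. set ys \<subseteq> D \<and> length ys < length xs \<and> simple_word ys = simple_word xs \<circ> reflection a"
proof (induction xs)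
  case Nil
  then show ?case using simple_nonneg_comb by simp
next
  case (Cons b xs)
  show ?case
  proof (cases "pos (simple_word xs a)")
    case False
    with Cons.IH Cons.prems obtain ys where
      "set ys \<subseteq> D" "length ys < length xs" "simple_word ys = simple_word xs \<circ> reflection a"
      by (meson dual_order.trans set_subset_Cons)
    with Cons.prems show ?thesis by (intro exI[where x="b # ys"]) auto
  next
    case True
    \<comment> \<open>\<open>s_b\<close> makes the positive root \<open>simple_word xs a\<close> negative, so it must be \<open>b\<close> itself\<close>
    have "simple_word xs a = b"
      using reflection_simple_positive_root[of b "simple_word xs a"] True Cons.prems
        simple_word_in_R D_subset_R by auto
    then have "simple_word (b # xs) \<circ> reflection a = simple_word xs"
      using reflection_simple_word[of xs a] by (auto simp: fun_eq_iff)
    moreover have "set xs \<subseteq> D" "length xs < length (b # xs)" using Cons.prems by auto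
    ultimately show ?thesis by metis
  qed
qed

lemma exchange_left:
  assumes "set xs \<subseteq> D" "a \<in> D" "\<not> pos (simple_word (rev xs) a)"
  shows "\<exists>zs. set zs \<subseteq> D \<and> length zs < length xs \<and> simple_word zs = reflection a \<circ> simple_word xs"
proof -
  obtain ys where ys: "set ys \<subseteq> D" "length ys < length xs"
    and eq: "simple_word ys = simple_word (rev xs) \<circ> reflection a"
    using exchange_right[of "rev xs" a] assms by auto
  have "simple_word (rev ys) = reflection a \<circ> simple_word xs"
  proof
    fix x
    have "simple_word (rev ys) x = simple_word (rev ys) (simple_word ys (reflection a (simple_word xs x)))"
      by (simp add: eq)
    then show "simple_word (rev ys) x = (reflection a \<circ> simple_word xs) x" by simp
  qed
  with ys show ?thesis by (intro exI[where x="rev ys"]) auto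
qed

lemma reduced_word_snoc_pos:
  assumes "reduced_word D (ys @ [a])"
  shows "pos (simple_word ys a)"
proof (rule ccontr)
  have ys: "set ys \<subseteq> D" and a: "a \<in> D" using assms by (auto simp: reduced_word_def)
  assume "\<not> pos (simple_word ys a)"
  then obtain zs where "set zs \<subseteq> D" "length zs < length ys" "simple_word zs = simple_word (ys @ [a])"
    using exchange_right[OF ys a] by (auto simp: simple_word_append)
  then show False using wlen_le_length[of zs D] assms by (auto simp: reduced_word_def)
qed

lemma reduced_word_Cons_pos:
  assumes "reduced_word D (a # xs)"
  shows "pos (simple_word (rev xs) a)"
proof (rule ccontr)
  have xs: "set xs \<subseteq> D" and a: "a \<in> D" using assms by (auto simp: reduced_word_def)
  assume "\<not> pos (simple_word (rev xs) a)"
  then obtain zs where "set zs \<subseteq> D" "length zs < length xs" "simple_word zs = simple_word (a # xs)"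
    using exchange_left[OF xs a] by auto
  then show False using wlen_le_length[of zs D] assms by (auto simp: reduced_word_def)
qed

lemma nonneg_comb_inner_simple_pos:
  assumes "pos b" "b \<noteq> 0"
  shows "\<exists>d\<in>D. b \<bullet> d > 0"
proof (rule ccontr)
  assume "\<not> (\<exists>d\<in>D. b \<bullet> d > 0)"
  then have "(\<Sum>d\<in>D. coeff b d * (b \<bullet> d)) \<le> 0"
    by (intro sum_nonpos mult_nonneg_nonpos nonneg_comb_coeff_nonneg[OF assms(1)]) auto
  moreover have "b \<bullet> b = (\<Sum>d\<in>D. coeff b d * (b \<bullet> d))"
    by (subst (2) sum_coeff[symmetric]) (simp add: inner_sum_right)
  ultimately show False using assms(2) inner_gt_zero_iff[of b] by linarith
qed

lemma positive_root_conj_simple: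
  assumes "b \<in> R" "pos b"
  shows "\<exists>xs a. set xs \<subseteq> D \<and> a \<in> D \<and> b = simple_word xs a"
proof -
  obtain n where "ht b = real n" using nonneg_comb_ht_nat[OF assms(2)] by blast
  then show ?thesis using assms
  proof (induction n arbitrary: b rule: less_induct)
    case (less n b)
    show ?case
    proof (cases "b \<in> D")
      case True
      then show ?thesis by (intro exI[where x="[]"] exI[where x=b]) auto
    next
      case False
      obtain d where d: "d \<in> D" "b \<bullet> d > 0"
        using nonneg_comb_inner_simple_pos less.prems root_nonzero by blast
      have "d \<noteq> 0" using d(1) D_subset_R root_nonzero by auto
      then have k: "b \<bullet> coroot d > 0" using d by (simp add: coroot_inner)
      define b' where "b' = reflection d b"
      have b'R: "b' \<in> R" using reflection_in_R d(1) D_subset_R less.prems b'_def by blast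
      have b'_pos: "pos b'" using reflection_simple_positive_root d(1) less.prems False b'_def by blast
      obtain n' where n': "ht b' = real n'" using nonneg_comb_ht_nat[OF b'_pos] by blast
      have "ht b' = ht b - b \<bullet> coroot d"
        unfolding b'_def reflection_coroot by (simp add: ht_diff ht_scaleR ht_simple d)
      then have "n' < n" using n' less.prems(1) k by simp
      then obtain xs a where "set xs \<subseteq> D" "a \<in> D" "b' = simple_word xs a"
        using less.IH b'R b'_pos n' by blast
      moreover have "b = reflection d b'" unfolding b'_def by simp
      ultimately show ?thesis using d(1) by (intro exI[where x="d # xs"] exI[where x=a]) auto
    qed
  qed
qed

lemma reflection_in_weyl:
  assumes "b \<in> R" "pos b"
  shows "reflection b \<in> weyl D"
proof -
  obtain xs a where xs: "set xs \<subseteq> D" "a \<in> D" "b = simple_word xs a"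
    using positive_root_conj_simple[OF assms] by blast
  have "reflection b = simple_word (xs @ [a] @ rev xs)"
  proof
    fix x
    have "reflection b x = reflection (simple_word xs a) (simple_word xs (simple_word (rev xs) x))"
      using xs by simp
    also have "\<dots> = simple_word (xs @ [a] @ rev xs) x"
      unfolding reflection_simple_word by (simp add: simple_word_append)
    finally show "reflection b x = simple_word (xs @ [a] @ rev xs) x" .
  qed
  with xs show ?thesis using simple_word_in_weyl[of "xs @ [a] @ rev xs"] by auto
qed

end

section \<open>Minuscule weights\<close>

locale minuscule_system = simple_root_system +
  fixes ai lam :: 'a
  assumes ai_in_D: "ai \<in> D" and minuscule: "minuscule R D ai lam"
begin

lemma inner_coroot_simple: "b \<in> D \<Longrightarrow> lam \<bullet> coroot b = (if b = ai then 1 else 0)"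
  using minuscule unfolding minuscule_def fund_weight_def by auto

lemma inner_coroot_nonneg: "b \<in> R \<Longrightarrow> pos b \<Longrightarrow> lam \<bullet> coroot b \<ge> 0"
proof -
  assume b: "b \<in> R" "pos b"
  have "lam \<bullet> d \<ge> 0" if "d \<in> D" for d
  proof -
    have "d \<bullet> d > 0" using that D_subset_R root_nonzero by auto
    moreover have "2 * (lam \<bullet> d) / (d \<bullet> d) \<ge> 0"
      using inner_coroot_simple[OF that] by (simp add: coroot_inner)
    ultimately show ?thesis by (simp add: zero_le_divide_iff) (use \<open>d \<bullet> d > 0\<close> in linarith)
  qed
  then have "(\<Sum>d\<in>D. coeff b d * (lam \<bullet> d)) \<ge> 0"
    by (intro sum_nonneg mult_nonneg_nonneg nonneg_comb_coeff_nonneg[OF b(2)])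
  moreover have "lam \<bullet> b = (\<Sum>d\<in>D. coeff b d * (lam \<bullet> d))"
    by (subst sum_coeff[symmetric]) (simp add: inner_sum_right)
  moreover have "b \<bullet> b > 0" using root_nonzero[OF b(1)] by simp
  ultimately show ?thesis by (simp add: coroot_inner)
qed

lemma inner_coroot_bounds: "b \<in> R \<Longrightarrow> -1 \<le> lam \<bullet> coroot b \<and> lam \<bullet> coroot b \<le> 1"
proof -
  have le1: "c \<in> R \<Longrightarrow> pos c \<Longrightarrow> lam \<bullet> coroot c \<le> 1" for c
    using minuscule unfolding minuscule_def pos_roots_def by auto
  assume b: "b \<in> R"
  then consider "pos b" | "pos (- b)" using root_pos_or_neg by blast
  then show ?thesis
  proof cases
    case 1
    then show ?thesis using inner_coroot_nonneg[OF b 1] le1[OF b 1] by linarith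
  next
    case 2
    then have "0 \<le> lam \<bullet> coroot (- b)" "lam \<bullet> coroot (- b) \<le> 1"
      using inner_coroot_nonneg le1 uminus_root[OF b] by auto
    then show ?thesis by (simp add: coroot_uminus)
  qed
qed

lemma inner_coroot_orbit_bounds:
  "set xs \<subseteq> D \<Longrightarrow> b \<in> R \<Longrightarrow>
    -1 \<le> simple_word xs lam \<bullet> coroot b \<and> simple_word xs lam \<bullet> coroot b \<le> 1"
  unfolding inner_coroot_simple_word by (intro inner_coroot_bounds simple_word_in_R) auto

lemma inner_coroot_orbit_simple_Ints:
  "set xs \<subseteq> D \<Longrightarrow> a \<in> D \<Longrightarrow> simple_word xs lam \<bullet> coroot a \<in> \<int>"
proof (induction xs arbitrary: a)
  case Nil
  then show ?case using inner_coroot_simple[of a] by simp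
next
  case (Cons b xs)
  have "simple_word (b # xs) lam \<bullet> coroot a =
      simple_word xs lam \<bullet> coroot a - (simple_word xs lam \<bullet> coroot b) * (b \<bullet> coroot a)"
    by (simp add: reflection_coroot inner_diff_left)
  moreover have "b \<bullet> coroot a \<in> \<int>"
    using Cons.prems D_subset_R by (intro inner_coroot_Ints) auto
  ultimately show ?case using Cons by auto
qed

lemma inner_coroot_orbit_cases:
  assumes "w \<in> weyl D" "b \<in> R" "pos b"
  shows "w lam \<bullet> coroot b \<in> {-1, 0, 1}"
proof -
  obtain ys where ys: "set ys \<subseteq> D" "w = simple_word ys"
    using assms(1) unfolding weyl_def by blast
  obtain xs a where xs: "set xs \<subseteq> D" "a \<in> D" "b = simple_word xs a"
    using positive_root_conj_simple[OF assms(2,3)] by blast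
  have "w lam \<bullet> coroot b = simple_word (rev xs @ ys) lam \<bullet> coroot a"
    using inner_simple_word[of "rev xs" _ "coroot a"]
    by (simp add: ys(2) xs(3) simple_word_append coroot_orthogonal_transformation
        orthogonal_transformation_simple_word)
  moreover have "simple_word (rev xs @ ys) lam \<bullet> coroot a \<in> \<int>"
    using xs ys by (intro inner_coroot_orbit_simple_Ints) auto
  moreover have "-1 \<le> w lam \<bullet> coroot b \<and> w lam \<bullet> coroot b \<le> 1"
    using inner_coroot_orbit_bounds[OF ys(1) assms(2)] ys(2) by simp
  ultimately show ?thesis by (auto elim!: Ints_cases)
qed

lemma WP_fixes: "v \<in> WP D ai \<Longrightarrow> v lam = lam"
proof -
  have "set xs \<subseteq> D - {ai} \<Longrightarrow> simple_word xs lam = lam" for xs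
    by (induction xs) (auto simp: reflection_coroot inner_coroot_simple)
  then show "v \<in> WP D ai \<Longrightarrow> v lam = lam" unfolding WP_def by auto
qed

lemma stabilizer_subset_WP: "w \<in> weyl D \<Longrightarrow> w lam = lam \<Longrightarrow> w \<in> WP D ai"
proof (induction "wlen D w" arbitrary: w rule: less_induct)
  case less
  obtain xs where xs: "reduced_word D xs" "simple_word xs = w"
    using reduced_word_exists[OF less.prems(1)] by blast
  show ?case
  proof (cases xs rule: rev_cases)
    case Nil
    then show ?thesis using xs id_in_WP by simp
  next
    case (snoc ys a)
    have ys: "set ys \<subseteq> D" and a: "a \<in> D"
      using xs(1) snoc by (auto simp: reduced_word_def)
    have w: "w = simple_word ys \<circ> reflection a"
      using xs snoc by (simp add: simple_word_append)
    have aR: "a \<in> R" using a D_subset_R by auto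
    have "lam \<bullet> coroot a = lam \<bullet> coroot (w a)"
      using inner_coroot_simple_word[of "rev xs" lam a] simple_word_rev_cancel[of xs lam] xs(2) less.prems(2)
      by simp
    also have "w a = - simple_word ys a"
      using w reflection_self[OF root_nonzero[OF aR]] simple_word_uminus by simp
    finally have "lam \<bullet> coroot a = - (lam \<bullet> coroot (simple_word ys a))"
      by (simp add: coroot_uminus)
    moreover have "lam \<bullet> coroot (simple_word ys a) \<ge> 0"
      using reduced_word_snoc_pos[of ys a] xs(1) snoc simple_word_in_R[OF ys aR]
      by (intro inner_coroot_nonneg) auto
    ultimately have "a \<noteq> ai" using inner_coroot_simple[OF a] by auto
    then have a_WP: "reflection a \<in> WP D ai"
      using a unfolding WP_def by (auto intro!: exI[where x="[a]"])
    then have "simple_word ys lam = lam" using w WP_fixes[OF a_WP] less.prems(2) by auto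
    moreover have "wlen D (simple_word ys) < wlen D w"
      using wlen_le_length[OF ys] xs snoc by (simp add: reduced_word_def)
    ultimately have "simple_word ys \<in> WP D ai"
      using less.hyps simple_word_in_weyl[OF ys] by blast
    with a_WP show ?thesis using w WP_comp by simp
  qed
qed

definition tight_word :: "'a list \<Rightarrow> bool" where
  "tight_word xs \<longleftrightarrow> set xs \<subseteq> D \<and> real (length xs) = ht (lam - simple_word xs lam)"

lemma ht_diff_orbit_le_length: "set xs \<subseteq> D \<Longrightarrow> ht (lam - simple_word xs lam) \<le> length xs"
proof (induction xs)
  case (Cons b xs)
  then have "ht (lam - simple_word (b # xs) lam)
      = ht (lam - simple_word xs lam) + simple_word xs lam \<bullet> coroot b"
    by (simp add: ht_diff_reflection ht_simple)
  moreover have "simple_word xs lam \<bullet> coroot b \<le> 1"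
    using inner_coroot_orbit_bounds[of xs b] Cons.prems D_subset_R by auto
  ultimately show ?case using Cons by auto
qed (simp add: ht_zero)

lemma tight_word_Cons:
  "tight_word (a # xs) \<longleftrightarrow> a \<in> D \<and> tight_word xs \<and> simple_word xs lam \<bullet> coroot a = 1"
proof -
  have "a \<in> D \<Longrightarrow> set xs \<subseteq> D \<Longrightarrow> ht (lam - simple_word (a # xs) lam) =
      ht (lam - simple_word xs lam) + simple_word xs lam \<bullet> coroot a"
    by (simp add: ht_diff_reflection ht_simple)
  moreover have "a \<in> D \<Longrightarrow> set xs \<subseteq> D \<Longrightarrow> simple_word xs lam \<bullet> coroot a \<le> 1"
    using inner_coroot_orbit_bounds D_subset_R by blast
  ultimately show ?thesis
    using ht_diff_orbit_le_length[of xs] unfolding tight_word_def by force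
qed

lemma reduced_WupP_word_tight:
  "reduced_word D xs \<Longrightarrow> simple_word xs \<in> WupP D ai \<Longrightarrow> tight_word xs"
proof (induction xs)
  case Nil
  then show ?case by (simp add: tight_word_def ht_zero)
next
  case (Cons a xs)
  have a: "a \<in> D" and xs: "set xs \<subseteq> D"
    using Cons.prems(1) by (auto simp: reduced_word_def)
  have "tight_word xs"
    using Cons reduced_word_ConsD WupP_reduced_word_ConsD by blast
  define k where "k = simple_word xs lam \<bullet> coroot a"
  have "k \<in> {-1, 0, 1}"
    unfolding k_def using a D_subset_R simple_nonneg_comb
    by (intro inner_coroot_orbit_cases simple_word_in_weyl xs) auto
  moreover have "k \<ge> 0"
    unfolding k_def inner_coroot_simple_word
    using reduced_word_Cons_pos[OF Cons.prems(1)] simple_word_in_R[of "rev xs" a] xs a D_subset_R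
    by (intro inner_coroot_nonneg) auto
  moreover have "k \<noteq> 0"
  proof
    assume "k = 0"
    \<comment> \<open>then \<open>s_a\<close> fixes \<open>simple_word xs lam\<close>, so the shorter \<open>simple_word xs\<close>
       lies in the coset of \<open>simple_word (a # xs)\<close>\<close>
    define g where "g = simple_word (rev xs @ a # xs)"
    have "g lam = lam"
      using \<open>k = 0\<close> by (simp add: g_def k_def simple_word_append reflection_coroot)
    then have "g \<in> WP D ai"
      using a xs by (intro stabilizer_subset_WP) (auto simp: g_def intro!: simple_word_in_weyl)
    moreover have "simple_word (a # xs) \<circ> g = simple_word xs"
      by (auto simp: g_def simple_word_append fun_eq_iff)
    ultimately have "wlen D (simple_word (a # xs)) \<le> wlen D (simple_word xs)"
      using WupP_wlen_le[OF Cons.prems(2)] by metis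
    then show False
      using reduced_word_ConsD[OF Cons.prems(1)] Cons.prems(1) by (simp add: reduced_word_def)
  qed
  ultimately have "k = 1" by auto
  with a \<open>tight_word xs\<close> show ?case by (simp add: tight_word_Cons k_def)
qed

lemma tight_word_eq:
  "tight_word xs \<Longrightarrow> tight_word ys \<Longrightarrow> simple_word xs lam = simple_word ys lam \<Longrightarrow>
    simple_word xs = simple_word ys"
proof (induction xs arbitrary: ys)
  case Nil
  then show ?case by (simp add: tight_word_def ht_zero)
next
  case (Cons a xs)
  have a: "a \<in> D" and xs: "tight_word xs" and pair: "simple_word xs lam \<bullet> coroot a = 1"
    using Cons.prems(1) by (auto simp: tight_word_Cons)
  have ys: "set ys \<subseteq> D" and len: "real (length ys) = ht (lam - simple_word ys lam)"
    using Cons.prems(2) by (auto simp: tight_word_def)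
  have aR: "a \<in> R" using a D_subset_R by auto
  have ys_lam: "simple_word ys lam = reflection a (simple_word xs lam)"
    using Cons.prems(3) by simp
  \<comment> \<open>\<open>s_a\<close> strips a letter off \<open>ys\<close> too, leaving a tight word with the image of \<open>xs\<close>\<close>
  then have "lam \<bullet> coroot (simple_word (rev ys) a) = -1"
    using inner_reflection_coroot_self[OF root_nonzero[OF aR]] pair
    by (simp add: inner_coroot_simple_word[symmetric])
  then have "\<not> pos (simple_word (rev ys) a)"
    using inner_coroot_nonneg simple_word_in_R[of "rev ys" a] ys aR by force
  then obtain zs where zs: "set zs \<subseteq> D" "length zs < length ys"
    and zs_eq: "simple_word zs = reflection a \<circ> simple_word ys"
    using exchange_left[OF ys a] by blast
  have zs_lam: "simple_word zs lam = simple_word xs lam"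
    using zs_eq ys_lam by simp
  have "real (length ys) = real (length xs) + 1"
    using Cons.prems(1,3) len by (simp add: tight_word_def)
  then have "tight_word zs"
    using zs zs_lam ht_diff_orbit_le_length[OF zs(1)] xs unfolding tight_word_def by auto
  then have "simple_word xs = simple_word zs"
    using Cons.IH xs zs_lam by simp
  then show ?case using zs_eq by (auto simp: fun_eq_iff)
qed

lemma WupP_tight_word:
  assumes "u \<in> WupP D ai"
  obtains xs where "tight_word xs" "simple_word xs = u" "wlen D u = length xs"
proof -
  obtain xs where "reduced_word D xs" "simple_word xs = u"
    using reduced_word_exists assms WupP_subset_weyl by blast
  with assms reduced_WupP_word_tight that show ?thesis by (auto simp: reduced_word_def)
qed

lemma wlen_WupP: "u \<in> WupP D ai \<Longrightarrow> real (wlen D u) = ht (lam - u lam)"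
  by (metis WupP_tight_word tight_word_def)

lemma WupP_eqI: "u \<in> WupP D ai \<Longrightarrow> u' \<in> WupP D ai \<Longrightarrow> u lam = u' lam \<Longrightarrow> u = u'"
  by (metis WupP_tight_word tight_word_eq)

lemma lenP_eq_ht:
  assumes "w \<in> weyl D"
  shows "real (lenP D ai w) = ht (lam - w lam)"
proof -
  have lam_eq: "u lam = w lam" if "v \<in> WP D ai" "w = u \<circ> v" for u v
    using WP_fixes[OF that(1)] that(2) by simp
  obtain u0 v0 where u0: "u0 \<in> WupP D ai" and v0: "v0 \<in> WP D ai" and w: "w = u0 \<circ> v0"
    using WupP_coset_representative[OF assms] by blast
  have "(THE u. u \<in> WupP D ai \<and> (\<exists>v\<in>WP D ai. w = u \<circ> v)) = u0"
  proof (rule the_equality)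
    show "u0 \<in> WupP D ai \<and> (\<exists>v\<in>WP D ai. w = u0 \<circ> v)" using u0 v0 w by blast
    fix u assume "u \<in> WupP D ai \<and> (\<exists>v\<in>WP D ai. w = u \<circ> v)"
    with lam_eq[OF v0 w] show "u = u0"
      using WupP_eqI[OF _ u0] lam_eq by metis
  qed
  then show ?thesis
    using wlen_WupP[OF u0] lam_eq[OF v0 w] by (simp add: lenP_def)
qed

lemma lenP_reflection_comp:
  assumes "w \<in> weyl D" "alpha \<in> R" "pos alpha"
  shows "real (lenP D ai (reflection alpha \<circ> w))
    = real (lenP D ai w) + (w lam \<bullet> coroot alpha) * ht alpha"
  using lenP_eq_ht[OF weyl_comp[OF reflection_in_weyl[OF assms(2,3)] assms(1)]] lenP_eq_ht[OF assms(1)]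
  by (simp add: ht_diff_reflection)

lemma lenP_reflection_comp_Suc:
  assumes "w \<in> weyl D" "alpha \<in> R" "pos alpha"
    and "lenP D ai (reflection alpha \<circ> w) = lenP D ai w + 1"
  shows "alpha \<in> D \<and> w lam \<bullet> coroot alpha = 1"
proof -
  have "(w lam \<bullet> coroot alpha) * ht alpha = 1"
    using lenP_reflection_comp[OF assms(1-3)] assms(4) by simp
  moreover have "w lam \<bullet> coroot alpha \<in> {-1, 0, 1}"
    using inner_coroot_orbit_cases assms by blast
  moreover have "ht alpha > 0" using positive_root_ht_pos assms by blast
  ultimately have "w lam \<bullet> coroot alpha = 1" "ht alpha = 1"
    by (auto simp: mult_less_0_iff)
  then show ?thesis using positive_root_ht_1 assms by blast
qed

lemma lenP_reflection_comp_highest: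
  assumes "w \<in> weyl D" "alpha \<in> R" "pos alpha" and psi: "highest_root R D psi"
    and "int (lenP D ai (reflection alpha \<circ> w)) = int (lenP D ai w) - int (height D psi)"
  shows "alpha = psi \<and> w lam \<bullet> coroot psi = -1"
proof -
  define k where "k = w lam \<bullet> coroot alpha"
  have "real (lenP D ai (reflection alpha \<circ> w)) = real (lenP D ai w) - real (height D psi)"
    using assms(5) by (metis of_int_diff of_int_of_nat_eq)
  then have "k * ht alpha = - ht psi"
    using lenP_reflection_comp[OF assms(1-3)]
      height_eq_ht[OF highest_root_nonneg_comb[OF psi]] by (simp add: k_def)
  moreover have "pos (psi - alpha)" using psi assms(2) unfolding highest_root_def by auto
  then have "ht alpha \<le> ht psi" using nonneg_comb_ht_nonneg by (force simp: ht_diff)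
  moreover have "k \<in> {-1, 0, 1}" unfolding k_def using inner_coroot_orbit_cases assms by blast
  moreover have "ht alpha > 0" using positive_root_ht_pos assms by blast
  ultimately have "k = -1" "ht (psi - alpha) = 0"
    unfolding ht_diff by auto
  moreover have "psi - alpha = 0"
    using nonneg_comb_ht_eq_0 \<open>pos (psi - alpha)\<close> \<open>ht (psi - alpha) = 0\<close> by blast
  ultimately show ?thesis by (simp add: k_def)
qed

end

theorem proposition17:
  fixes R D :: "'a::euclidean_space set" and ai lam psi alpha :: 'a and u :: "'a \<Rightarrow> 'a"
  assumes "root_system R" and "irreducible_rs R" and "simple_system R D"
    and "ai \<in> D" and "minuscule R D ai lam"
    and "highest_root R D psi"
    and "u \<in> WupP D ai"
    and "alpha \<in> pos_roots R D"
  shows "(lenP D ai (reflection alpha \<circ> u) = lenP D ai u + 1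
            \<longrightarrow> alpha \<in> D \<and> u lam \<bullet> coroot alpha = 1)
       \<and> (int (lenP D ai (reflection alpha \<circ> u))
              = int (lenP D ai u) - (int (coxeter_number D psi) - 1)
            \<longrightarrow> alpha = psi \<and> u lam \<bullet> coroot psi = -1)"
proof -
  interpret minuscule_system R D ai lam
    using assms by unfold_locales auto
  have u: "u \<in> weyl D" using assms(7) WupP_subset_weyl by blast
  have alpha: "alpha \<in> R" "pos alpha" using assms(8) unfolding pos_roots_def by auto
  have "int (coxeter_number D psi) - 1 = int (height D psi)"
    by (simp add: coxeter_number_def)
  then show ?thesis
    using lenP_reflection_comp_Suc[OF u alpha] lenP_reflection_comp_highest[OF u alpha assms(6)]
    by simp
qed

end
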